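(* Let $M$ be a finite regular cell complex with weights $w_\sigma>0$ on its cells, and let $d\ge 1$. For every combinatorial differential $d$-form $\omega\in\Omega^d(M)$, $$d^*\omega = p\big(\partial^*\circ\omega - (-1)^{d-1}\,\omega\circ\partial^*\big),$$ where $p$ is the orthogonal projection from the space of linear maps $C_*(M)\to C_*(M)$ of degree $d-1$ onto $\Omega^{d-1}(M)$.
   Context: $C_*(M)=\bigoplus_p C_p(M)$ is the real cellular chain complex of $M$ with boundary $\partial$, each cell carrying a fixed orientation; $C_p(M)=0$ for $p<0$ or $p>\dim M$. Inner product on $C_*(M)$: $\langle\sigma,\sigma'\rangle=\delta_{\sigma,\sigma'}w_\sigma$ for oriented cells $\sigma,\sigma'$; $\partial^*$ is the adjoint of $\partial$ with respect to it. A linear map $\omega:C_*(M)\to C_*(M)$ has degree $d$ if $\omega(C_p(M))\subset C_{p-d}(M)$ for all $p$; it is local if for each oriented $p$-cell $\alpha$, $\omega(\alpha)$ is a linear combination of $(p-d)$-cells that are faces of $\alpha$. $\Omega^d(M)$ is the space of local linear maps of degree $d$ (combinatorial differential $d$-forms). On linear maps of degree $d$ define the $L^2$ inner product $\langle u,v\rangle=\sum_\sigma \frac{1}{w_\sigma}\langle u(\sigma),v(\sigma)\rangle$ (sum over all cells). The differential $d:\Omega^{d-1}(M)\to\Omega^{d}(M)$ is $dv=\partial\circ v-(-1)^{d-1}v\circ\partial$, and $d^*:\Omega^d(M)\to\Omega^{d-1}(M)$ is its adjoint: $\langle d^*u,v\rangle=\langle u,dv\rangle$ for all $u\in\Omega^d(M)$,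 $v\in\Omega^{d-1}(M)$. *)

theory Defs
  imports Complex_Main
begin

text \<open>
  Cells are elements of the set C (of an arbitrary type 'c); dm gives the
  dimension of a cell (dm); face t s means that t is a face of s (reflexive);
  bd t s is the coefficient of the oriented cell t in the boundary of the
  oriented cell s (incidence number, determined by the fixed orientations).
  Chains are functions 'c => real (only values on C matter); a linear map
  C_*(M) -> C_*(M) is represented by its matrix A in the cell basis:
  A t s is the coefficient of t in A(s).
\<close>

definition regular_cell_complex ::
  "'c set \<Rightarrow> ('c \<Rightarrow> nat) \<Rightarrow> ('c \<Rightarrow> 'c \<Rightarrow> bool) \<Rightarrow> ('c \<Rightarrow> 'c \<Rightarrow> real) \<Rightarrow> bool" where
  "regular_cell_complex C dm face bd \<longleftrightarrow>
     finite C
   \<and> (\<forall>t s. face t s \<longrightarrow> t \<in> C \<and> s \<in> C)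
   \<and> (\<forall>s\<in>C. face s s)
   \<and> (\<forall>r s t. face r s \<longrightarrow> face s t \<longrightarrow> face r t)
   \<and> (\<forall>t s. face t s \<longrightarrow> dm t \<le> dm s)
   \<and> (\<forall>t s. face t s \<longrightarrow> dm t = dm s \<longrightarrow> t = s)
   \<and> (\<forall>t s. face t s \<longrightarrow> dm t < dm s \<longrightarrow>
          (\<exists>r. face t r \<and> face r s \<and> dm r + 1 = dm s))
   \<and> (\<forall>t s. bd t s \<in> {-1, 0, 1})
   \<and> (\<forall>t s. bd t s \<noteq> 0 \<longleftrightarrow> face t s \<and> dm t + 1 = dm s)
   \<and> (\<forall>r s. (\<Sum>t\<in>C. bd r t * bd t s) = 0)"

type_synonym 'c lmap = "'c \<Rightarrow> 'c \<Rightarrow> real"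

definition on_cells :: "'c set \<Rightarrow> 'c lmap \<Rightarrow> bool" where
  "on_cells C A \<longleftrightarrow> (\<forall>t s. A t s \<noteq> 0 \<longrightarrow> t \<in> C \<and> s \<in> C)"

definition has_degree :: "'c set \<Rightarrow> ('c \<Rightarrow> nat) \<Rightarrow> nat \<Rightarrow> 'c lmap \<Rightarrow> bool" where
  "has_degree C dm k A \<longleftrightarrow> on_cells C A \<and> (\<forall>t s. A t s \<noteq> 0 \<longrightarrow> dm t + k = dm s)"

text \<open>Omega^k(M): local linear maps of degree k.\<close>
definition forms :: "'c set \<Rightarrow> ('c \<Rightarrow> nat) \<Rightarrow> ('c \<Rightarrow> 'c \<Rightarrow> bool) \<Rightarrow> nat \<Rightarrow> 'c lmap set" where
  "forms C dm face k = {A. has_degree C dm k A \<and> (\<forall>t s. A t s \<noteq> 0 \<longrightarrow> face t s)}"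

definition comp :: "'c set \<Rightarrow> 'c lmap \<Rightarrow> 'c lmap \<Rightarrow> 'c lmap" where
  "comp C A B = (\<lambda>t s. \<Sum>r\<in>C. A t r * B r s)"

definition app :: "'c set \<Rightarrow> 'c lmap \<Rightarrow> ('c \<Rightarrow> real) \<Rightarrow> ('c \<Rightarrow> real)" where
  "app C A x = (\<lambda>t. \<Sum>s\<in>C. A t s * x s)"

definition chain_inner :: "'c set \<Rightarrow> ('c \<Rightarrow> real) \<Rightarrow> ('c \<Rightarrow> real) \<Rightarrow> ('c \<Rightarrow> real) \<Rightarrow> real" where
  "chain_inner C w x y = (\<Sum>s\<in>C. x s * y s * w s)"

definition adjoint :: "'c set \<Rightarrow> ('c \<Rightarrow> real) \<Rightarrow> 'c lmap \<Rightarrow> 'c lmap" where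
  "adjoint C w A = (THE B. on_cells C B \<and>
     (\<forall>x y. chain_inner C w (app C A x) y = chain_inner C w x (app C B y)))"

definition l2_inner :: "'c set \<Rightarrow> ('c \<Rightarrow> real) \<Rightarrow> 'c lmap \<Rightarrow> 'c lmap \<Rightarrow> real" where
  "l2_inner C w u v = (\<Sum>s\<in>C. (1 / w s) * chain_inner C w (\<lambda>t. u t s) (\<lambda>t. v t s))"

definition cdiff :: "'c set \<Rightarrow> 'c lmap \<Rightarrow> nat \<Rightarrow> 'c lmap \<Rightarrow> 'c lmap" where
  "cdiff C bd d v = (\<lambda>t s. comp C bd v t s - (-1) ^ (d - 1) * comp C v bd t s)"

definition codiff :: "'c set \<Rightarrow> ('c \<Rightarrow> nat) \<Rightarrow> ('c \<Rightarrow> 'c \<Rightarrow> bool) \<Rightarrow> ('c \<Rightarrow> real)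
    \<Rightarrow> 'c lmap \<Rightarrow> nat \<Rightarrow> 'c lmap \<Rightarrow> 'c lmap" where
  "codiff C dm face w bd d u = (THE u'. u' \<in> forms C dm face (d - 1) \<and>
     (\<forall>v\<in>forms C dm face (d - 1). l2_inner C w u' v = l2_inner C w u (cdiff C bd d v)))"

definition orth_proj :: "'c set \<Rightarrow> ('c \<Rightarrow> nat) \<Rightarrow> ('c \<Rightarrow> 'c \<Rightarrow> bool) \<Rightarrow> ('c \<Rightarrow> real)
    \<Rightarrow> nat \<Rightarrow> 'c lmap \<Rightarrow> 'c lmap" where
  "orth_proj C dm face w k A = (THE B. B \<in> forms C dm face k \<and>
     (\<forall>v\<in>forms C dm face k. l2_inner C w (\<lambda>t s. A t s - B t s) v = 0))"

end

theory Submission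
  imports Defs
begin

text \<open>
  For the weighted inner product on chains, the adjoint of a matrix A has entries
  A s t * w s / w t. Moving the boundary across the L2 inner product of linear maps turns
  l2_inner \<omega> (d v) into l2_inner P v, where P is the map whose projection is claimed,
  for every v. So the condition characterising d* \<omega> among the (d-1)-forms is literally
  the condition characterising the orthogonal projection of P, and the two definite
  descriptions coincide; neither existence nor uniqueness of either has to be shown.
\<close>

definition weighted_transpose :: "'c set \<Rightarrow> ('c \<Rightarrow> real) \<Rightarrow> 'c lmap \<Rightarrow> 'c lmap" where
  "weighted_transpose C w A = (\<lambda>t s. if t \<in> C \<and> s \<in> C then A s t * w s / w t else 0)"

lemma weighted_transpose_mult_weight:
  assumes "\<forall>s\<in>C. w s > 0" "r \<in> C" "t \<in> C"
  shows "weighted_transpose C w A r t * w r = A t r * w t"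
  using assms by (auto simp: weighted_transpose_def)

lemma chain_inner_app_weighted_transpose:
  assumes "\<forall>s\<in>C. w s > 0"
  shows "chain_inner C w (app C A x) y = chain_inner C w x (app C (weighted_transpose C w A) y)"
proof -
  have "chain_inner C w (app C A x) y = (\<Sum>t\<in>C. \<Sum>s\<in>C. A t s * x s * y t * w t)"
    unfolding chain_inner_def app_def by (simp add: sum_distrib_right)
  also have "\<dots> = (\<Sum>s\<in>C. \<Sum>t\<in>C. A t s * x s * y t * w t)"
    by (rule sum.swap)
  also have "\<dots> = (\<Sum>s\<in>C. \<Sum>t\<in>C. x s * (weighted_transpose C w A s t * y t) * w s)"
    using weighted_transpose_mult_weight[OF assms] by (intro sum.cong refl) (simp add: algebra_simps)
  also have "\<dots> = chain_inner C w x (app C (weighted_transpose C w A) y)"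
    unfolding chain_inner_def app_def by (simp add: sum_distrib_right sum_distrib_left)
  finally show ?thesis .
qed

lemma chain_inner_app_indicators:
  assumes "finite C" "a \<in> C" "b \<in> C"
  shows "chain_inner C w (\<lambda>r. if r = a then 1 else 0) (app C B (\<lambda>r. if r = b then 1 else 0))
    = B a b * w a"
proof -
  have "(\<Sum>s\<in>C. B a s * (if s = b then 1 else 0)) = (\<Sum>s\<in>C. if s = b then B a s else 0)"
    by (rule sum.cong) auto
  then show ?thesis
    using assms unfolding chain_inner_def app_def
    by (simp add: if_distrib[of "\<lambda>z. z * _"] cong: if_cong)
qed

lemma adjoint_eq_weighted_transpose:
  assumes "finite C" "\<forall>s\<in>C. w s > 0"
  shows "adjoint C w A = weighted_transpose C w A"
  unfolding adjoint_def
proof (rule the_equality)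
  show "on_cells C (weighted_transpose C w A) \<and>
      (\<forall>x y. chain_inner C w (app C A x) y = chain_inner C w x (app C (weighted_transpose C w A) y))"
    using chain_inner_app_weighted_transpose[OF assms(2)]
    by (auto simp: on_cells_def weighted_transpose_def split: if_splits)
next
  fix B
  assume B: "on_cells C B \<and> (\<forall>x y. chain_inner C w (app C A x) y = chain_inner C w x (app C B y))"
  show "B = weighted_transpose C w A"
  proof (intro ext)
    fix a b
    show "B a b = weighted_transpose C w A a b"
    proof (cases "a \<in> C \<and> b \<in> C")
      case True
      let ?x = "\<lambda>r. if r = a then 1 else (0::real)" and ?y = "\<lambda>r. if r = b then 1 else (0::real)"
      have "B a b * w a = chain_inner C w ?x (app C B ?y)"
        using True by (simp add: chain_inner_app_indicators[OF assms(1)])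
      also have "\<dots> = chain_inner C w ?x (app C (weighted_transpose C w A) ?y)"
        using B chain_inner_app_weighted_transpose[OF assms(2)] by metis
      also have "\<dots> = weighted_transpose C w A a b * w a"
        using True by (simp add: chain_inner_app_indicators[OF assms(1)])
      finally show ?thesis
        using True assms(2) by auto
    next
      case False
      then show ?thesis
        using B by (auto simp: on_cells_def weighted_transpose_def)
    qed
  qed
qed

lemma l2_inner_expand:
  "l2_inner C w u v = (\<Sum>s\<in>C. \<Sum>t\<in>C. u t s * v t s * w t / w s)"
  unfolding l2_inner_def chain_inner_def by (simp add: sum_distrib_left algebra_simps)

lemma l2_inner_diff_scaled_left:
  "l2_inner C w (\<lambda>t s. A t s - c * B t s) v = l2_inner C w A v - c * l2_inner C w B v"
  unfolding l2_inner_expand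
  by (simp add: sum_subtractf[symmetric] sum_distrib_left algebra_simps diff_divide_distrib)

lemma l2_inner_diff_scaled_right:
  "l2_inner C w u (\<lambda>t s. A t s - c * B t s) = l2_inner C w u A - c * l2_inner C w u B"
  unfolding l2_inner_expand
  by (simp add: sum_subtractf[symmetric] sum_distrib_left algebra_simps diff_divide_distrib)

lemma l2_inner_comp_left:
  assumes "\<forall>s\<in>C. w s > 0"
  shows "l2_inner C w u (comp C A v) = l2_inner C w (comp C (weighted_transpose C w A) u) v"
proof -
  have "l2_inner C w u (comp C A v) = (\<Sum>s\<in>C. \<Sum>t\<in>C. \<Sum>r\<in>C. u t s * A t r * v r s * w t / w s)"
    unfolding l2_inner_expand comp_def
    by (simp add: sum_distrib_left sum_distrib_right sum_divide_distrib algebra_simps)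
  also have "\<dots> = (\<Sum>s\<in>C. \<Sum>r\<in>C. \<Sum>t\<in>C. u t s * A t r * v r s * w t / w s)"
    by (rule sum.cong[OF refl], rule sum.swap)
  also have "\<dots> = (\<Sum>s\<in>C. \<Sum>r\<in>C. \<Sum>t\<in>C. weighted_transpose C w A r t * u t s * v r s * w r / w s)"
    using weighted_transpose_mult_weight[OF assms] by (intro sum.cong refl) (simp add: algebra_simps)
  also have "\<dots> = l2_inner C w (comp C (weighted_transpose C w A) u) v"
    unfolding l2_inner_expand comp_def
    by (simp add: sum_distrib_left sum_distrib_right sum_divide_distrib algebra_simps)
  finally show ?thesis .
qed

lemma l2_inner_comp_right:
  assumes "\<forall>s\<in>C. w s > 0"
  shows "l2_inner C w u (comp C v A) = l2_inner C w (comp C u (weighted_transpose C w A)) v"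
proof -
  have "l2_inner C w u (comp C v A) = (\<Sum>s\<in>C. \<Sum>t\<in>C. \<Sum>r\<in>C. u t s * v t r * A r s * w t / w s)"
    unfolding l2_inner_expand comp_def
    by (simp add: sum_distrib_left sum_distrib_right sum_divide_distrib algebra_simps)
  also have "\<dots> = (\<Sum>t\<in>C. \<Sum>r\<in>C. \<Sum>s\<in>C. u t s * v t r * A r s * w t / w s)"
    by (subst sum.swap, rule sum.cong[OF refl], rule sum.swap)
  also have "\<dots> = (\<Sum>t\<in>C. \<Sum>r\<in>C. \<Sum>s\<in>C. u t s * weighted_transpose C w A s r * v t r * w t / w r)"
  proof (intro sum.cong refl)
    fix t r s assume "t \<in> C" "r \<in> C" "s \<in> C"
    then show "u t s * v t r * A r s * w t / w s = u t s * weighted_transpose C w A s r * v t r * w t / w r"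
      using assms by (auto simp: weighted_transpose_def)
  qed
  also have "\<dots> = (\<Sum>r\<in>C. \<Sum>t\<in>C. \<Sum>s\<in>C. u t s * weighted_transpose C w A s r * v t r * w t / w r)"
    by (rule sum.swap)
  also have "\<dots> = l2_inner C w (comp C u (weighted_transpose C w A)) v"
    unfolding l2_inner_expand comp_def
    by (simp add: sum_distrib_left sum_distrib_right sum_divide_distrib algebra_simps)
  finally show ?thesis .
qed

lemma l2_inner_cdiff:
  assumes "\<forall>s\<in>C. w s > 0"
  shows "l2_inner C w \<omega> (cdiff C bd d v) =
    l2_inner C w (\<lambda>t s. comp C (weighted_transpose C w bd) \<omega> t s
                        - (-1) ^ (d - 1) * comp C \<omega> (weighted_transpose C w bd) t s) v"
  unfolding cdiff_def l2_inner_diff_scaled_left l2_inner_diff_scaled_right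
  by (simp add: l2_inner_comp_left[OF assms, of \<omega> bd v] l2_inner_comp_right[OF assms, of \<omega> v bd])

theorem lemma2p4:
  fixes C :: "'c set" and dm :: "'c \<Rightarrow> nat" and face :: "'c \<Rightarrow> 'c \<Rightarrow> bool"
    and bd :: "'c lmap" and w :: "'c \<Rightarrow> real" and d :: nat and \<omega> :: "'c lmap"
  assumes "regular_cell_complex C dm face bd"
    and "\<forall>s\<in>C. w s > 0"
    and "d \<ge> 1"
    and "\<omega> \<in> forms C dm face d"
  shows "codiff C dm face w bd d \<omega> =
    orth_proj C dm face w (d - 1)
      (\<lambda>t s. comp C (adjoint C w bd) \<omega> t s - (-1) ^ (d - 1) * comp C \<omega> (adjoint C w bd) t s)"
proof -
  have "finite C"
    using assms(1) by (simp add: regular_cell_complex_def)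
  define P where "P = (\<lambda>t s. comp C (weighted_transpose C w bd) \<omega> t s
                             - (-1) ^ (d - 1) * comp C \<omega> (weighted_transpose C w bd) t s)"
  have "l2_inner C w u v = l2_inner C w \<omega> (cdiff C bd d v) \<longleftrightarrow>
        l2_inner C w (\<lambda>t s. P t s - u t s) v = 0" for u v
    using l2_inner_diff_scaled_left[of C w P 1 u v] l2_inner_cdiff[OF assms(2), of \<omega> bd d v]
    by (auto simp: P_def)
  then show ?thesis
    unfolding codiff_def orth_proj_def adjoint_eq_weighted_transpose[OF \<open>finite C\<close> assms(2)]
    by (simp add: P_def)
qed

end
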